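(* Let $R\ge1$, $k\in\mathbb N$ and $a,b\in B^{\omega_k}_R(e)\cap\mathcal B^{\mathbb C}_{TM}$. Let $0<\varepsilon<1$ with $\|a\|_{\omega_k}+\|b\|_{\omega_k}+2\varepsilon<R$, and let $c,d\in\mathbb C^{\mathcal T_0}(\omega_k)$ with $c(\emptyset)=d(\emptyset)=0$ and $\|c\|_{\omega_k},\|d\|_{\omega_k}<\varepsilon$. Then $a+c,\,b+d\in\mathcal B^{\mathbb C}_{TM}$ and for every $\tau\in\mathcal T$ $$\big|\big((a+c)\cdot(b+d)-a\cdot b\big)(\tau)\big|\le 2\varepsilon\,\frac{(4R)^{|\tau|}}{\omega_k(\tau)}.$$
   Context: $\mathcal T$ is the set of rooted trees (at least one vertex), $\mathcal T_0=\mathcal T\cup\{\emptyset\}$, $|\tau|$ the number of vertices. $\mathrm{OST}(\tau)$ is the set of ordered subtrees (vertex subsets connected by edges of $\tau$ and containing the root if nonempty), $s_\tau$ the induced rooted tree, $\tau\setminus s$ the forest obtained by deleting $s$ and adjacent edges. $\mathcal B^{\mathbb C}_{TM}$ is the set of $a\colon\mathcal T_0\to\mathbb C$ with $a(\emptyset)=1$ and $|a(\tau)|\le CK^{|\tau|}$ for some $C,K>0$, with product $(a\cdot b)(\tau)=\sum_{s\in\mathrm{OST}(\tau)}b(s_\tau)\prod_{\theta\in\tau\setminus s}a(\theta)$ and unit $e$ ($e(\emptyset)=1$, else $0$). $\omega_k(\tau)=2^{-k|\tau|}$, $\mathbb C^{\mathcal T_0}(\omega_k)=\{a\mid\|a\|_{\omega_k}:=\sup_{\tau\in\mathcal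 T_0}|a(\tau)|\omega_k(\tau)<\infty\}$, and $B^{\omega_k}_R(x)$ is the open $R$-ball about $x$ in this Banach space. *)

theory Defs
  imports Complex_Main "HOL-Library.Multiset"
begin

text \<open>Rooted trees are represented by planar representatives; the paper's rooted
  trees are their isomorphism classes (children unordered). Functions on
  \<open>T_0\<close> are represented by isomorphism-invariant functions on
  \<open>ptree option\<close>, where \<open>None\<close> is the empty tree.\<close>

datatype ptree = PNode "ptree list"

inductive tiso :: "ptree \<Rightarrow> ptree \<Rightarrow> bool" where
  "list_all2 tiso ts us \<Longrightarrow> mset us = mset vs \<Longrightarrow> tiso (PNode ts) (PNode vs)"

definition tm_inv :: "(ptree option \<Rightarrow> 'b) \<Rightarrow> bool" where
  "tm_inv f \<longleftrightarrow> (\<forall>x y. tiso x y \<longrightarrow> f (Some x) = f (Some y))"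

fun tsize :: "ptree \<Rightarrow> nat" where
  "tsize (PNode ts) = 1 + sum_list (map tsize ts)"

definition osize :: "ptree option \<Rightarrow> nat" where
  "osize t = (case t of None \<Rightarrow> 0 | Some s \<Rightarrow> tsize s)"

text \<open>All ordered subtrees \<open>s\<close> of a tree (one entry per admissible vertex subset),
  together with the forest \<open>\<tau> \<setminus> s\<close>.\<close>
fun cuts :: "ptree \<Rightarrow> (ptree option \<times> ptree list) list" where
  "cuts (PNode ts) = (None, [PNode ts]) #
     map (\<lambda>cs. (Some (PNode (List.map_filter fst cs)), concat (map snd cs)))
         (product_lists (map cuts ts))"

definition tm_prod :: "(ptree option \<Rightarrow> complex) \<Rightarrow> (ptree option \<Rightarrow> complex) \<Rightarrow> ptree option \<Rightarrow> complex" where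
  "tm_prod a b t = (case t of None \<Rightarrow> b None
     | Some \<tau> \<Rightarrow> sum_list (map (\<lambda>(s, F). b s * prod_list (map (\<lambda>\<theta>. a (Some \<theta>)) F)) (cuts \<tau>)))"

definition tm_unit :: "ptree option \<Rightarrow> complex" where
  "tm_unit t = (if t = None then 1 else 0)"

definition BTM :: "(ptree option \<Rightarrow> complex) set" where
  "BTM = {a. tm_inv a \<and> a None = 1 \<and>
     (\<exists>C K. C > 0 \<and> K > 0 \<and> (\<forall>t. cmod (a t) \<le> C * K ^ osize t))}"

definition omega :: "nat \<Rightarrow> ptree option \<Rightarrow> real" where
  "omega k t = 1 / 2 ^ (k * osize t)"

definition in_space :: "nat \<Rightarrow> (ptree option \<Rightarrow> complex) \<Rightarrow> bool" where
  "in_space k a \<longleftrightarrow> tm_inv a \<and> bdd_above (range (\<lambda>t. cmod (a t) * omega k t))"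

definition wnorm :: "nat \<Rightarrow> (ptree option \<Rightarrow> complex) \<Rightarrow> real" where
  "wnorm k a = (SUP t. cmod (a t) * omega k t)"

definition wball :: "nat \<Rightarrow> real \<Rightarrow> (ptree option \<Rightarrow> complex) \<Rightarrow> (ptree option \<Rightarrow> complex) set" where
  "wball k R x = {y. in_space k y \<and> wnorm k (\<lambda>t. y t - x t) < R}"

end

theory Submission
  imports Defs
begin

text \<open>Both products expand as sums over the at most \<open>2^|\<tau>|\<close> cuts of \<open>\<tau>\<close>. A summand is a
  product of at most \<open>|\<tau>|\<close> factors, each bounded by \<open>R\<close> and moved by at most \<open>\<epsilon>\<close> relative to the
  weight \<open>K^|\<cdot>|\<close>, which is multiplicative along a cut. Telescoping bounds the change of each
  summand by \<open>|\<tau>| \<epsilon> R^|\<tau>| K^|\<tau>|\<close>, and \<open>|\<tau>| \<le> 2^|\<tau>|\<close> turns the sum into \<open>\<epsilon> (4R)^|\<tau>| K^|\<tau>|\<close>.\<close>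

lemma tsize_ge_1: "1 \<le> tsize t"
  by (cases t) simp

lemma osize_None [simp]: "osize None = 0"
  and osize_Some [simp]: "osize (Some t) = tsize t"
  by (simp_all add: osize_def)

lemma length_le_sum_list_tsize: "length F \<le> (\<Sum>\<theta>\<leftarrow>F. tsize \<theta>)"
proof (induct F)
  case (Cons \<theta> F)
  then show ?case using tsize_ge_1[of \<theta>] by simp
qed simp

lemma prod_list_map_mono:
  fixes f g :: "'b \<Rightarrow> 'a::linordered_semidom"
  assumes "\<And>x. x \<in> set xs \<Longrightarrow> 0 \<le> f x \<and> f x \<le> g x"
  shows "(\<Prod>x\<leftarrow>xs. f x) \<le> (\<Prod>x\<leftarrow>xs. g x)"
  using assms by (induct xs) (force intro!: mult_mono prod_list_nonneg)+

lemma prod_list_mult_power_tsize: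
  "(\<Prod>\<theta>\<leftarrow>F. c * x ^ tsize \<theta>) = c ^ length F * x ^ (\<Sum>\<theta>\<leftarrow>F. tsize \<theta>)"
  for c x :: "'a::comm_monoid_mult"
  by (induct F) (simp_all add: power_add ac_simps)

lemma length_cuts_le: "length (cuts t) \<le> 2 ^ tsize t"
proof (induct t)
  case (PNode ts)
  have "length (product_lists (map cuts ts)) = (\<Prod>t\<leftarrow>ts. length (cuts t))"
    by (simp add: length_product_lists foldr_conv_fold prod_list.eq_foldr o_def)
  also have "\<dots> \<le> (\<Prod>t\<leftarrow>ts. 2 ^ tsize t)"
    using PNode by (intro prod_list_map_mono) auto
  also have "\<dots> = 2 ^ (\<Sum>t\<leftarrow>ts. tsize t)"
    using prod_list_mult_power_tsize[of 1 2 ts] by simp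
  finally have "length (cuts (PNode ts)) \<le> 1 + 2 ^ (\<Sum>t\<leftarrow>ts. tsize t)"
    by simp
  also have "\<dots> \<le> 2 ^ tsize (PNode ts)"
    by simp
  finally show ?case .
qed

lemma sum_list_map_concat: "(\<Sum>x\<leftarrow>concat xss. f x) = (\<Sum>xs\<leftarrow>xss. \<Sum>x\<leftarrow>xs. f x)"
  by (induct xss) simp_all

lemma sum_list_tsize_map_filter_fst:
  "(\<Sum>\<theta>\<leftarrow>List.map_filter fst cs. tsize \<theta>) = (\<Sum>p\<leftarrow>cs. osize (fst p))"
  by (induct cs) (auto simp: List.map_filter_def osize_def split: option.splits)

lemma cuts_size: "(s, F) \<in> set (cuts t) \<Longrightarrow> osize s + (\<Sum>\<theta>\<leftarrow>F. tsize \<theta>) = tsize t"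
proof (induct t arbitrary: s F)
  case (PNode ts)
  consider "s = None" "F = [PNode ts]"
    | cs where "cs \<in> set (product_lists (map cuts ts))"
        "s = Some (PNode (List.map_filter fst cs))" "F = concat (map snd cs)"
    using PNode.prems by auto
  then show ?case
  proof cases
    case 1
    then show ?thesis by simp
  next
    case 2
    have "list_all2 (\<lambda>p t. p \<in> set (cuts t)) cs ts"
      using 2(1) by (simp add: product_lists_set list_all2_map2)
    then have "list_all2 (\<lambda>p t. osize (fst p) + (\<Sum>\<theta>\<leftarrow>snd p. tsize \<theta>) = tsize t) cs ts"
      using PNode.hyps by (auto simp: list_all2_conv_all_nth intro: nth_mem)
    then have "(\<Sum>p\<leftarrow>cs. osize (fst p) + (\<Sum>\<theta>\<leftarrow>snd p. tsize \<theta>)) = (\<Sum>t\<leftarrow>ts. tsize t)"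
      by (induct rule: list_all2_induct) auto
    then show ?thesis
      using 2 by (simp add: sum_list_tsize_map_filter_fst sum_list_addf
          sum_list_map_concat o_def)
  qed
qed

lemma cuts_None: "(None, F) \<in> set (cuts t) \<Longrightarrow> F = [t]"
  by (cases t) auto

definition cut_term ::
    "(ptree option \<Rightarrow> complex) \<Rightarrow> (ptree option \<Rightarrow> complex) \<Rightarrow> ptree option \<times> ptree list \<Rightarrow> complex" where
  "cut_term a b = (\<lambda>(s, F). b s * (\<Prod>\<theta>\<leftarrow>F. a (Some \<theta>)))"

lemma tm_prod_Some: "tm_prod a b (Some \<tau>) = (\<Sum>p\<leftarrow>cuts \<tau>. cut_term a b p)"
  by (simp add: tm_prod_def cut_term_def)

lemma norm_prod_list_le:
  fixes x :: "'b \<Rightarrow> 'a::real_normed_div_algebra" and w :: "'b \<Rightarrow> real"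
  assumes "\<And>i. i \<in> set L \<Longrightarrow> norm (x i) \<le> w i"
  shows "norm (\<Prod>i\<leftarrow>L. x i) \<le> (\<Prod>i\<leftarrow>L. w i)"
  using assms by (induct L) (force simp: norm_mult intro: mult_mono order_trans[OF norm_ge_zero])+

lemma norm_prod_list_diff_le:
  fixes x y :: "'b \<Rightarrow> 'a::real_normed_div_algebra" and w :: "'b \<Rightarrow> real" and e :: real
  assumes "\<And>i. i \<in> set L \<Longrightarrow> norm (x i) \<le> w i \<and> norm (y i) \<le> w i \<and> norm (x i - y i) \<le> e * w i"
  shows "norm ((\<Prod>i\<leftarrow>L. x i) - (\<Prod>i\<leftarrow>L. y i)) \<le> length L * e * (\<Prod>i\<leftarrow>L. w i)"
  using assms
proof (induct L)
  case (Cons i L)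
  let ?P = "\<Prod>j\<leftarrow>L. x j" and ?Q = "\<Prod>j\<leftarrow>L. y j" and ?W = "\<Prod>j\<leftarrow>L. w j"
  have P: "norm ?P \<le> ?W"
    using Cons.prems by (intro norm_prod_list_le) auto
  have IH: "norm (?P - ?Q) \<le> length L * e * ?W"
    using Cons by simp
  have "x i * ?P - y i * ?Q = (x i - y i) * ?P + y i * (?P - ?Q)"
    by (simp add: algebra_simps)
  then have "norm (x i * ?P - y i * ?Q) \<le> norm (x i - y i) * norm ?P + norm (y i) * norm (?P - ?Q)"
    by (metis norm_mult norm_triangle_ineq)
  also have "\<dots> \<le> e * w i * ?W + w i * (length L * e * ?W)"
    using Cons.prems P IH by (intro add_mono mult_mono) (auto intro: order_trans[OF norm_ge_zero])
  finally show ?case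
    by (simp add: algebra_simps)
qed simp

lemma norm_sum_list_le:
  fixes f :: "'b \<Rightarrow> 'a::real_normed_vector" and B :: real
  assumes "\<And>p. p \<in> set xs \<Longrightarrow> norm (f p) \<le> B"
  shows "norm (\<Sum>p\<leftarrow>xs. f p) \<le> length xs * B"
  using assms
proof (induct xs)
  case (Cons p xs)
  have "norm (\<Sum>q\<leftarrow>p # xs. f q) \<le> norm (f p) + norm (\<Sum>q\<leftarrow>xs. f q)"
    by (simp add: norm_triangle_ineq)
  also have "\<dots> \<le> B + length xs * B"
    using Cons by (intro add_mono) auto
  finally show ?case
    by (simp add: algebra_simps)
qed simp

lemma scaled_power_le:
  fixes R \<epsilon> :: real
  assumes "n \<le> m" "1 \<le> R" "0 \<le> \<epsilon>"
  shows "n * (\<epsilon> / R) * R ^ n \<le> m * \<epsilon> * R ^ m"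
proof -
  have "R ^ n \<le> R ^ Suc m"
    using assms by (intro power_increasing) auto
  from mult_left_mono[OF this assms(3)]
  have "\<epsilon> * R ^ n \<le> R * (\<epsilon> * R ^ m)"
    by (simp add: ac_simps)
  then have scaled: "\<epsilon> / R * R ^ n \<le> \<epsilon> * R ^ m"
    using assms(2) by (simp add: field_simps)
  have "n * (\<epsilon> / R * R ^ n) \<le> m * (\<epsilon> * R ^ m)"
    using assms by (intro mult_mono[OF _ scaled]) auto
  then show ?thesis
    by (simp only: mult.assoc)
qed

locale perturbed_factors =
  fixes a a' b b' :: "ptree option \<Rightarrow> complex" and R \<epsilon> K :: real
  assumes R_ge_1: "1 \<le> R" and eps_nonneg: "0 \<le> \<epsilon>" and K_nonneg: "0 \<le> K"
    and norm_a: "\<And>t. cmod (a t) \<le> R * K ^ osize t" and norm_a': "\<And>t. cmod (a' t) \<le> R * K ^ osize t"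
    and norm_b: "\<And>t. cmod (b t) \<le> R * K ^ osize t" and norm_b': "\<And>t. cmod (b' t) \<le> R * K ^ osize t"
    and norm_diff_a: "\<And>t. cmod (a' t - a t) \<le> \<epsilon> * K ^ osize t"
    and norm_diff_b: "\<And>t. cmod (b' t - b t) \<le> \<epsilon> * K ^ osize t"
    and b_None: "b None = 1" and b'_None: "b' None = 1"
begin

lemma norm_cut_term_diff_le:
  assumes "(s, F) \<in> set (cuts \<tau>)"
  shows "cmod (cut_term a' b' (s, F) - cut_term a b (s, F)) \<le> tsize \<tau> * \<epsilon> * R ^ tsize \<tau> * K ^ tsize \<tau>"
proof (cases s)
  case None
  then have "cut_term a' b' (s, F) - cut_term a b (s, F) = a' (Some \<tau>) - a (Some \<tau>)"
    using cuts_None[of F \<tau>] assms by (simp add: cut_term_def b_None b'_None)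
  then have "cmod (cut_term a' b' (s, F) - cut_term a b (s, F)) \<le> 1 * \<epsilon> * 1 * K ^ tsize \<tau>"
    using norm_diff_a[of "Some \<tau>"] by simp
  also have "\<dots> \<le> tsize \<tau> * \<epsilon> * R ^ tsize \<tau> * K ^ tsize \<tau>"
    using tsize_ge_1[of \<tau>] R_ge_1 eps_nonneg K_nonneg
    by (intro mult_right_mono mult_mono) auto
  finally show ?thesis .
next
  case (Some \<sigma>)
  define L where "L = Inl s # map Inr F"
  define w where "w = case_sum (\<lambda>s. R * K ^ osize s) (\<lambda>\<theta>. R * K ^ tsize \<theta>)"
  have length_L: "length L \<le> tsize \<tau>"
    using cuts_size[OF assms] length_le_sum_list_tsize[of F] tsize_ge_1[of \<sigma>]
    by (simp add: L_def Some)
  have "cmod (cut_term a' b' (s, F) - cut_term a b (s, F))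
      = cmod ((\<Prod>i\<leftarrow>L. case_sum b' (\<lambda>\<theta>. a' (Some \<theta>)) i) - (\<Prod>i\<leftarrow>L. case_sum b (\<lambda>\<theta>. a (Some \<theta>)) i))"
    by (simp add: cut_term_def L_def o_def)
  \<comment> \<open>Relative to the weight \<open>R K^|\<cdot>|\<close> of a factor, its perturbation is at most \<open>\<epsilon>/R\<close>.\<close>
  also have "\<dots> \<le> length L * (\<epsilon> / R) * (\<Prod>i\<leftarrow>L. w i)"
    using R_ge_1 norm_b norm_b' norm_diff_b
      norm_a[of "Some \<theta>" for \<theta>] norm_a'[of "Some \<theta>" for \<theta>] norm_diff_a[of "Some \<theta>" for \<theta>]
    by (intro norm_prod_list_diff_le) (auto simp: L_def w_def field_simps)
  also have "(\<Prod>i\<leftarrow>L. w i) = R ^ length L * K ^ tsize \<tau>"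
    using cuts_size[OF assms]
    by (simp add: L_def w_def o_def prod_list_mult_power_tsize flip: power_add)
  also have "length L * (\<epsilon> / R) * (R ^ length L * K ^ tsize \<tau>) \<le> tsize \<tau> * \<epsilon> * R ^ tsize \<tau> * K ^ tsize \<tau>"
    using mult_right_mono[OF scaled_power_le[OF length_L R_ge_1 eps_nonneg], of "K ^ tsize \<tau>"] K_nonneg
    by (simp add: ac_simps)
  finally show ?thesis .
qed

lemma norm_tm_prod_diff_le:
  "cmod (tm_prod a' b' (Some \<tau>) - tm_prod a b (Some \<tau>)) \<le> \<epsilon> * (4 * R) ^ tsize \<tau> * K ^ tsize \<tau>"
proof -
  let ?T = "tsize \<tau>"
  have "tm_prod a' b' (Some \<tau>) - tm_prod a b (Some \<tau>) = (\<Sum>p\<leftarrow>cuts \<tau>. cut_term a' b' p - cut_term a b p)"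
    by (simp add: tm_prod_Some sum_list_subtractf)
  also have "cmod \<dots> \<le> length (cuts \<tau>) * (?T * \<epsilon> * R ^ ?T * K ^ ?T)"
    by (intro norm_sum_list_le) (metis norm_cut_term_diff_le surj_pair)
  also have "\<dots> \<le> 2 ^ ?T * (2 ^ ?T * \<epsilon> * R ^ ?T * K ^ ?T)"
  proof -
    have "real (length (cuts \<tau>)) \<le> 2 ^ ?T"
      using length_cuts_le[of \<tau>] by (simp add: of_nat_le_iff[symmetric])
    moreover have "real ?T \<le> 2 ^ ?T"
      using less_exp[of ?T] by (simp add: of_nat_le_iff[symmetric])
    ultimately show ?thesis
      using R_ge_1 eps_nonneg K_nonneg by (intro mult_mono mult_right_mono) auto
  qed
  also have "\<dots> = \<epsilon> * (2 * 2 * R) ^ ?T * K ^ ?T"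
    by (simp only: power_mult_distrib ac_simps)
  finally show ?thesis
    by simp
qed

end

lemma wnorm_nonneg: "in_space k f \<Longrightarrow> 0 \<le> wnorm k f"
  unfolding wnorm_def in_space_def
  by (rule order_trans[OF _ cSUP_upper[of None]]) (simp_all add: omega_def)

lemma norm_le_of_wnorm_le:
  assumes "in_space k f" "wnorm k f \<le> M"
  shows "cmod (f t) \<le> M * (2 ^ k) ^ osize t"
proof -
  have "cmod (f t) * omega k t \<le> M"
    using assms unfolding wnorm_def in_space_def by (meson UNIV_I cSUP_upper order_trans)
  then show ?thesis
    by (simp add: omega_def power_mult field_simps)
qed

lemma norm_add_le_of_wnorm_le:
  assumes "in_space k f" "in_space k g" "wnorm k f + wnorm k g \<le> M"
  shows "cmod (f t + g t) \<le> M * (2 ^ k) ^ osize t"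
proof -
  have "cmod (f t + g t) \<le> wnorm k f * (2 ^ k) ^ osize t + wnorm k g * (2 ^ k) ^ osize t"
    using assms norm_le_of_wnorm_le[of k f] norm_le_of_wnorm_le[of k g]
    by (intro order_trans[OF norm_triangle_ineq] add_mono) auto
  also have "\<dots> \<le> M * (2 ^ k) ^ osize t"
    using assms(3) by (simp flip: distrib_right)
  finally show ?thesis .
qed

lemma add_in_BTM:
  assumes "a \<in> BTM" "in_space k a" "in_space k c" "c None = 0"
  shows "(\<lambda>t. a t + c t) \<in> BTM"
proof -
  define C where "C = wnorm k a + wnorm k c + 1"
  have "C > 0"
    using assms wnorm_nonneg by (simp add: C_def add_nonneg_pos)
  moreover have "cmod (a t + c t) \<le> C * (2 ^ k) ^ osize t" for t
    using assms by (intro norm_add_le_of_wnorm_le) (auto simp: C_def)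
  ultimately have "\<exists>C K. C > 0 \<and> K > 0 \<and> (\<forall>t. cmod (a t + c t) \<le> C * K ^ osize t)"
    by (intro exI[of _ C] exI[of _ "2 ^ k"]) auto
  then show ?thesis
    using assms by (auto simp: BTM_def tm_inv_def in_space_def)
qed

theorem lemmaB3:
  fixes R \<epsilon> :: real and k :: nat and a b c d :: "ptree option \<Rightarrow> complex"
  assumes "R \<ge> 1"
    and "a \<in> wball k R tm_unit \<inter> BTM" and "b \<in> wball k R tm_unit \<inter> BTM"
    and "0 < \<epsilon>" and "\<epsilon> < 1"
    and "wnorm k a + wnorm k b + 2 * \<epsilon> < R"
    and "in_space k c" and "in_space k d"
    and "c None = 0" and "d None = 0"
    and "wnorm k c < \<epsilon>" and "wnorm k d < \<epsilon>"
  shows "(\<lambda>t. a t + c t) \<in> BTM \<and> (\<lambda>t. b t + d t) \<in> BTM \<and>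
    (\<forall>\<tau>. cmod (tm_prod (\<lambda>t. a t + c t) (\<lambda>t. b t + d t) (Some \<tau>) - tm_prod a b (Some \<tau>))
          \<le> 2 * \<epsilon> * (4 * R) ^ tsize \<tau> / omega k (Some \<tau>))"
proof -
  have a: "in_space k a" "a \<in> BTM" and b: "in_space k b" "b \<in> BTM"
    using assms(2,3) by (auto simp: wball_def)
  have norms: "wnorm k a + wnorm k c \<le> R" "wnorm k b + wnorm k d \<le> R"
    "wnorm k a \<le> R" "wnorm k b \<le> R" "wnorm k c \<le> \<epsilon>" "wnorm k d \<le> \<epsilon>"
    using assms(4,6,11,12) wnorm_nonneg[OF a(1)] wnorm_nonneg[OF b(1)] by auto
  interpret perturbed_factors a "\<lambda>t. a t + c t" b "\<lambda>t. b t + d t" R \<epsilon> "2 ^ k"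
  proof unfold_locales
    fix t
    show "cmod (a t) \<le> R * (2 ^ k) ^ osize t" "cmod (b t) \<le> R * (2 ^ k) ^ osize t"
      using norm_le_of_wnorm_le a(1) b(1) norms(3,4) by auto
    show "cmod (a t + c t) \<le> R * (2 ^ k) ^ osize t" "cmod (b t + d t) \<le> R * (2 ^ k) ^ osize t"
      using norm_add_le_of_wnorm_le a(1) b(1) assms(7,8) norms(1,2) by auto
    show "cmod (a t + c t - a t) \<le> \<epsilon> * (2 ^ k) ^ osize t" "cmod (b t + d t - b t) \<le> \<epsilon> * (2 ^ k) ^ osize t"
      using norm_le_of_wnorm_le assms(7,8) norms(5,6) by auto
  qed (use assms(1,4,9,10) a(2) b(2) in \<open>auto simp: BTM_def\<close>)
  have "cmod (tm_prod (\<lambda>t. a t + c t) (\<lambda>t. b t + d t) (Some \<tau>) - tm_prod a b (Some \<tau>))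
      \<le> 2 * \<epsilon> * (4 * R) ^ tsize \<tau> / omega k (Some \<tau>)" for \<tau>
  proof -
    have "cmod (tm_prod (\<lambda>t. a t + c t) (\<lambda>t. b t + d t) (Some \<tau>) - tm_prod a b (Some \<tau>))
        \<le> \<epsilon> * (4 * R) ^ tsize \<tau> * (2 ^ k) ^ tsize \<tau>"
      by (rule norm_tm_prod_diff_le)
    also have "\<dots> \<le> 2 * \<epsilon> * (4 * R) ^ tsize \<tau> * (2 ^ k) ^ tsize \<tau>"
      using assms(1,4) by (intro mult_right_mono) auto
    also have "\<dots> = 2 * \<epsilon> * (4 * R) ^ tsize \<tau> / omega k (Some \<tau>)"
      by (simp add: omega_def power_mult)
    finally show ?thesis .
  qed
  then show ?thesis
    using add_in_BTM[OF a(2,1) assms(7,9)] add_in_BTM[OF b(2,1) assms(8,10)] by blast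
qed

end
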